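(* Let $n\ge 1$ and let $F_n(z)$ denote the $n$-th truncation of the continued fraction $\dfrac{1}{2z+\dfrac{1}{2z+\dfrac{1}{\ddots}}}$, i.e. $F_1(z)=\dfrac{1}{2z}$ and $F_{m+1}(z)=\dfrac{1}{2z+F_m(z)}$. Let $\theta_j=\dfrac{j\pi}{n+1}$. Then $$F_n(z)=\sum_{j=1}^n\frac{\sin^2\theta_j}{(n+1)\,(z-i\cos\theta_j)}.$$ *)

theory Defs
  imports Complex_Main
begin

text \<open>Truncations of the continued fraction 1/(2z + 1/(2z + ...)).
  cf 0 z = 0 is an auxiliary starting value, so that cf 1 z = 1/(2z) and
  cf (m+1) z = 1/(2z + cf m z).\<close>
fun cf :: "nat \<Rightarrow> complex \<Rightarrow> complex" where
  "cf 0 z = 0"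
| "cf (Suc m) z = 1 / (2 * z + cf m z)"

end

theory Submission
  imports Defs
begin

text \<open>Running the three-term recurrence \<open>y m = 2 z y (m+1) + y (m+2)\<close> (\<open>m < n\<close>)
  backwards from \<open>y (n+1) = 0\<close> shows \<open>y 1 = cf n z * y 0\<close> for each of its solutions.
  Let \<open>\<theta>\<^sub>j = j\<pi>/(n+1)\<close>. The sine modes \<open>k \<mapsto> (-i)^k sin (k\<theta>\<^sub>j)\<close> solve the recurrence
  for \<open>z = i cos \<theta>\<^sub>j\<close> and vanish at \<open>k = 0\<close> and \<open>k = n+1\<close>. Hence, by the discrete
  orthogonality \<open>\<Sum>\<^sub>j sin \<theta>\<^sub>j sin (k\<theta>\<^sub>j) = (n+1)/2 * [k = 1]\<close>, the sequence
  \<open>[k = 0] + \<Sum>\<^sub>j i sin \<theta>\<^sub>j / ((n+1)(z - i cos \<theta>\<^sub>j)) * (-i)^k sin (k\<theta>\<^sub>j)\<close> solves the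
  recurrence for every other \<open>z\<close>, and its value at \<open>k = 1\<close> is the claimed sum.
  Applying the backward argument to a sine mode shows that \<open>z = i cos \<theta>\<^sub>j\<close> would make
  one of the denominators \<open>2z + cf m z\<close> vanish.\<close>

lemma sum_cos_multiples:
  fixes a :: real
  shows "2 * sin (a / 2) * (\<Sum>j=1..n. cos (real j * a)) = sin ((real n + 1 / 2) * a) - sin (a / 2)"
proof (induction n)
  case 0
  then show ?case by simp
next
  case (Suc n)
  have "sin ((real (Suc n) + 1 / 2) * a) - sin ((real n + 1 / 2) * a) = 2 * sin (a / 2) * cos (real (Suc n) * a)"
    by (simp add: sin_diff_sin algebra_simps add_divide_distrib)
  with Suc show ?case by (simp add: distrib_left)
qed

lemma sum_cos_multiples_pi:
  fixes n m :: nat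
  assumes "m < 2 * (n + 1)"
  shows "(\<Sum>j=1..n. cos (real m * (real j * pi / real (n + 1))))
    = (if m = 0 then real n else - (1 + (-1) ^ m) / 2)"
proof (cases "m = 0")
  case False
  define a where "a = real m * pi / real (n + 1)"
  have "real m < 2 * real (n + 1)" using assms by linarith
  then have "real m * pi < 2 * real (n + 1) * pi" by simp
  then have "a / 2 < pi" by (simp add: a_def field_simps)
  moreover have "0 < a / 2" using False by (simp add: a_def)
  ultimately have pos: "sin (a / 2) > 0" by (simp add: sin_gt_zero)
  have "(real n + 1 / 2) * a = real m * pi - a / 2" by (simp add: a_def field_simps)
  then have "sin ((real n + 1 / 2) * a) = - ((-1) ^ m * sin (a / 2))" by (simp add: sin_diff)
  then have "sin (a / 2) * (2 * (\<Sum>j=1..n. cos (real j * a)) + 1 + (-1) ^ m) = 0"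
    using sum_cos_multiples[of a n] by (simp add: algebra_simps)
  then have "2 * (\<Sum>j=1..n. cos (real j * a)) + 1 + (-1) ^ m = 0"
    using pos by simp
  then have "(\<Sum>j=1..n. cos (real j * a)) = - (1 + (-1) ^ m) / 2"
    by (simp add: field_simps)
  moreover have "real m * (real j * pi / real (n + 1)) = real j * a" for j
    by (simp add: a_def mult_ac)
  ultimately show ?thesis using False by simp
qed simp

lemma sum_sin_mult_sin_pi:
  fixes n k l :: nat
  assumes "k \<in> {1..n}" "l \<in> {1..n}"
  shows "(\<Sum>j=1..n. sin (real k * (real j * pi / real (n + 1))) * sin (real l * (real j * pi / real (n + 1))))
    = (if k = l then real (n + 1) / 2 else 0)"
proof -
  define d where "d = nat \<bar>int k - int l\<bar>"
  define S where "S m = (\<Sum>j=1..n. cos (real m * (real j * pi / real (n + 1))))" for m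
  have cos_abs: "cos (\<bar>a\<bar> * t) = cos (a * t)" for a t :: real
    by (simp add: abs_if)
  have "real d = \<bar>real k - real l\<bar>" by (simp add: d_def)
  then have "sin (real k * t) * sin (real l * t) = (cos (real d * t) - cos (real (k + l) * t)) / 2" for t
    by (simp add: sin_times_sin cos_abs left_diff_distrib distrib_right)
  then have "(\<Sum>j=1..n. sin (real k * (real j * pi / real (n + 1))) * sin (real l * (real j * pi / real (n + 1))))
      = (S d - S (k + l)) / 2"
    by (simp only: S_def sum_subtractf flip: sum_divide_distrib)
  also have "\<dots> = (if k = l then real (n + 1) / 2 else 0)"
  proof -
    have "S m = (if m = 0 then real n else - (1 + (-1) ^ m) / 2)" if "m < 2 * (n + 1)" for m
      unfolding S_def using that by (rule sum_cos_multiples_pi)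
    moreover have "d < 2 * (n + 1)" "k + l < 2 * (n + 1)"
      using assms by (auto simp: d_def)
    moreover have "k + l = d + 2 * min k l" by (simp add: d_def)
    ultimately show ?thesis
      using assms by (auto simp: d_def power_add power_mult)
  qed
  finally show ?thesis .
qed

definition sine_mode :: "real \<Rightarrow> nat \<Rightarrow> complex" where
  "sine_mode t k = (- \<i>) ^ k * complex_of_real (sin (real k * t))"

lemma sine_mode_recurrence:
  "sine_mode t m = 2 * (\<i> * complex_of_real (cos t)) * sine_mode t (Suc m) + sine_mode t (Suc (Suc m))"
proof -
  define s where "s k = complex_of_real (sin (real k * t))" for k
  have "sin (real m * t) + sin (real (Suc (Suc m)) * t) = 2 * cos t * sin (real (Suc m) * t)"
    by (simp add: sin_plus_sin algebra_simps add_divide_distrib)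
  then have "complex_of_real (sin (real m * t) + sin (real (Suc (Suc m)) * t))
      = complex_of_real (2 * cos t * sin (real (Suc m) * t))"
    by (rule arg_cong)
  then have "s m = 2 * complex_of_real (cos t) * s (Suc m) - s (Suc (Suc m))"
    unfolding s_def by (simp add: eq_diff_eq)
  then have "sine_mode t m = (- \<i>) ^ m * (2 * complex_of_real (cos t) * s (Suc m) - s (Suc (Suc m)))"
    by (simp add: sine_mode_def s_def)
  then show ?thesis
    by (simp add: sine_mode_def s_def algebra_simps)
qed

lemma sine_mode_last: "sine_mode (real j * pi / real (n + 1)) (Suc n) = 0"
proof -
  have "real (Suc n) * (real j * pi / real (n + 1)) = real j * pi" by simp
  then show ?thesis by (simp only: sine_mode_def sin_npi mult_zero_right of_real_0)
qed

lemma sine_mode_0 [simp]: "sine_mode t 0 = 0"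
  by (simp add: sine_mode_def)

lemma cf_backward_recurrence:
  fixes y :: "nat \<Rightarrow> complex"
  assumes nz: "\<forall>m<n. 2 * z + cf m z \<noteq> 0"
    and rec: "\<And>m. m < n \<Longrightarrow> y m = 2 * z * y (Suc m) + y (Suc (Suc m))"
    and last: "y (Suc n) = 0"
    and "k \<le> n"
  shows "y (Suc n - k) = cf k z * y (n - k)"
  using \<open>k \<le> n\<close>
proof (induction k)
  case 0
  then show ?case using last by simp
next
  case (Suc k)
  have IH: "y (Suc (n - k)) = cf k z * y (n - k)"
    using Suc by (simp add: Suc_diff_le)
  have "y (n - Suc k) = (2 * z + cf k z) * y (n - k)"
    using rec[of "n - Suc k"] Suc.prems IH by (simp add: Suc_diff_Suc algebra_simps)
  moreover have "2 * z + cf k z \<noteq> 0" using nz Suc.prems by simp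
  ultimately show ?case
    using Suc.prems by (simp add: Suc_diff_Suc field_simps)
qed

corollary cf_eq_recurrence_ratio:
  fixes y :: "nat \<Rightarrow> complex"
  assumes "\<forall>m<n. 2 * z + cf m z \<noteq> 0"
    and "\<And>m. m < n \<Longrightarrow> y m = 2 * z * y (Suc m) + y (Suc (Suc m))"
    and "y (Suc n) = 0"
  shows "y 1 = cf n z * y 0"
  using cf_backward_recurrence[OF assms order_refl] by simp

lemma cf_defined_imp_not_pole:
  assumes nz: "\<forall>m<n. 2 * z + cf m z \<noteq> 0" and j: "j \<in> {1..n}"
  shows "z \<noteq> \<i> * complex_of_real (cos (real j * pi / real (n + 1)))"
proof
  define t where "t = real j * pi / real (n + 1)"
  assume z: "z = \<i> * complex_of_real (cos (real j * pi / real (n + 1)))"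
  have rec: "sine_mode t m = 2 * z * sine_mode t (Suc m) + sine_mode t (Suc (Suc m))" if "m < n" for m
    unfolding z t_def by (rule sine_mode_recurrence)
  have last: "sine_mode t (Suc n) = 0"
    unfolding t_def by (rule sine_mode_last)
  have "sine_mode t 1 = 0"
    using cf_eq_recurrence_ratio[OF nz rec last] by simp
  moreover have "real j * pi < real (n + 1) * pi" using j by simp
  then have "sin t > 0"
    using j by (intro sin_gt_zero) (simp_all add: t_def field_simps)
  ultimately show False
    by (simp add: sine_mode_def)
qed

definition partial_fraction_seq :: "nat \<Rightarrow> complex \<Rightarrow> nat \<Rightarrow> complex" where
  "partial_fraction_seq n z k = (if k = 0 then 1 else 0) +
     (\<Sum>j=1..n. \<i> * complex_of_real (sin (real j * pi / real (n + 1)))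
        / (of_nat (n + 1) * (z - \<i> * complex_of_real (cos (real j * pi / real (n + 1)))))
        * sine_mode (real j * pi / real (n + 1)) k)"

lemma partial_fraction_seq_last: "partial_fraction_seq n z (Suc n) = 0"
  unfolding partial_fraction_seq_def sine_mode_last by simp

lemma partial_fraction_seq_recurrence:
  assumes poles: "\<And>j. j \<in> {1..n} \<Longrightarrow> z \<noteq> \<i> * complex_of_real (cos (real j * pi / real (n + 1)))"
    and "m < n"
  shows "partial_fraction_seq n z m = 2 * z * partial_fraction_seq n z (Suc m) + partial_fraction_seq n z (Suc (Suc m))"
proof -
  define t where "t j = real j * pi / real (n + 1)" for j
  define g where "g j = \<i> * complex_of_real (sin (t j)) / (of_nat (n + 1) * (z - \<i> * complex_of_real (cos (t j))))" for j
  define y where "y = partial_fraction_seq n z"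
  have y_eq: "y k = (if k = 0 then 1 else 0) + (\<Sum>j=1..n. g j * sine_mode (t j) k)" for k
    by (simp add: y_def partial_fraction_seq_def g_def t_def)
  have summand: "g j * (sine_mode (t j) m - 2 * z * sine_mode (t j) (Suc m) - sine_mode (t j) (Suc (Suc m)))
      = - ((- \<i>) ^ m * complex_of_real (2 / real (n + 1) * (sin (t j) * sin (real (Suc m) * t j))))"
    if "j \<in> {1..n}" for j
  proof -
    have "g j = (\<i> * complex_of_real (sin (t j)) / of_nat (n + 1)) / (z - \<i> * complex_of_real (cos (t j)))"
      by (simp add: g_def divide_divide_eq_left mult.commute)
    then have cancel: "g j * (z - \<i> * complex_of_real (cos (t j))) = \<i> * complex_of_real (sin (t j)) / of_nat (n + 1)"
      using poles[OF that] by (simp add: t_def)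
    have "sine_mode (t j) m - 2 * z * sine_mode (t j) (Suc m) - sine_mode (t j) (Suc (Suc m))
        = - 2 * (z - \<i> * complex_of_real (cos (t j))) * sine_mode (t j) (Suc m)"
      by (subst sine_mode_recurrence) (simp add: algebra_simps)
    then have "g j * (sine_mode (t j) m - 2 * z * sine_mode (t j) (Suc m) - sine_mode (t j) (Suc (Suc m)))
        = - 2 * (g j * (z - \<i> * complex_of_real (cos (t j)))) * sine_mode (t j) (Suc m)"
      by (simp only: mult_ac)
    then show ?thesis
      unfolding cancel by (simp add: sine_mode_def algebra_simps)
  qed
  have orth: "(\<Sum>j=1..n. sin (t j) * sin (real (Suc m) * t j)) = (if m = 0 then real (n + 1) / 2 else 0)"
    using sum_sin_mult_sin_pi[of 1 n "Suc m"] \<open>m < n\<close> by (simp add: t_def)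
  have "y m - 2 * z * y (Suc m) - y (Suc (Suc m))
      = (if m = 0 then 1 else 0) + (\<Sum>j=1..n. g j * (sine_mode (t j) m - 2 * z * sine_mode (t j) (Suc m) - sine_mode (t j) (Suc (Suc m))))"
    by (simp add: y_eq sum_subtractf sum.distrib sum_distrib_left algebra_simps)
  also have "\<dots> = (if m = 0 then 1 else 0)
      - (- \<i>) ^ m * complex_of_real (2 / real (n + 1) * (\<Sum>j=1..n. sin (t j) * sin (real (Suc m) * t j)))"
    by (simp add: summand sum_distrib_left sum_negf)
  also have "\<dots> = 0"
  proof -
    have "2 / real (n + 1) * (if m = 0 then real (n + 1) / 2 else 0) = (if m = 0 then 1 else 0)"
      by simp
    then show ?thesis
      unfolding orth by simp
  qed
  finally show ?thesis by (simp add: y_def algebra_simps)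
qed

theorem lemma2:
  fixes n :: nat and z :: complex
  assumes "n \<ge> 1"
    and "\<forall>m<n. 2 * z + cf m z \<noteq> 0"
  shows "cf n z = (\<Sum>j=1..n.
            complex_of_real ((sin (real j * pi / real (n + 1)))\<^sup>2)
            / (of_nat (n + 1) * (z - \<i> * complex_of_real (cos (real j * pi / real (n + 1))))))"
proof -
  have "partial_fraction_seq n z m = 2 * z * partial_fraction_seq n z (Suc m) + partial_fraction_seq n z (Suc (Suc m))"
    if "m < n" for m
    using cf_defined_imp_not_pole[OF assms(2)] that by (rule partial_fraction_seq_recurrence)
  then have "partial_fraction_seq n z 1 = cf n z * partial_fraction_seq n z 0"
    using assms(2) partial_fraction_seq_last by (intro cf_eq_recurrence_ratio) auto
  then show ?thesis
    by (simp add: partial_fraction_seq_def sine_mode_def power2_eq_square mult_ac)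
qed

end
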